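(* Let $n\ge 3$ be odd and consider the path $P_n$ with vertices $u_1,\dots,u_n$ and edges $\{u_j,u_{j+1}\}$, $1\le j\le n-1$. Let $\alpha\neq0$ be real, give the edge $\{u_1,u_2\}$ weight $1/\alpha$ and all other edges weight $1$. If $|\alpha|>\sqrt{(n-1)/2}$, then the end vertex $u_1$ is sedentary.
   Context: For a weighted graph with weighted adjacency matrix $A$ (entries equal to edge weights, $0$ for non-adjacent pairs), the transition matrix is $U(t)=e^{itA}$. A vertex $u$ is sedentary if $\inf_{t>0}|U(t)_{u,u}|\ge C$ for some constant $0<C\le1$. *)

theory Defs
  imports Complex_Main "Jordan_Normal_Form.Matrix"
begin

text \<open>Weighted path P_n: vertex u_(j+1) is index j (0-based), so u_1 is index 0.
  Edge {u_1,u_2} has weight 1/alpha, other path edges weight 1, non-edges 0.\<close>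
definition path_adj :: "nat \<Rightarrow> real \<Rightarrow> complex mat" where
  "path_adj n \<alpha> = mat n n (\<lambda>(i,j).
     if (i = 0 \<and> j = 1) \<or> (i = 1 \<and> j = 0) then complex_of_real (1 / \<alpha>)
     else if i + 1 = j \<or> j + 1 = i then 1 else 0)"

definition transition :: "complex mat \<Rightarrow> real \<Rightarrow> complex mat" where
  "transition A t = mat (dim_row A) (dim_col A) (\<lambda>(i,j).
     \<Sum>k. ((\<i> * complex_of_real t) ^ k / of_nat (fact k)) * (A ^\<^sub>m k) $$ (i,j))"

definition sedentary :: "complex mat \<Rightarrow> nat \<Rightarrow> bool" where
  "sedentary A u \<longleftrightarrow> (\<exists>C::real. 0 < C \<and> C \<le> 1 \<and>
     (INF t\<in>{0<..}. cmod (transition A t $$ (u,u))) \<ge> C)"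

end

theory Submission
  imports Defs "HOL-Analysis.Analysis"
begin

(* For odd n the weighted path has a real null vector v = (1, 0, -1/alpha, 0, 1/alpha, 0, ...)
   with ||v||^2 = 1 + (n - 1) / (2 alpha^2).  Write e_0 = v / ||v||^2 + w with w orthogonal to v.
   As U(t) fixes v and is unitary, it keeps w orthogonal to v, so
   U(t)_00 = 1 / ||v||^2 + <w, U(t) w>  and  |<w, U(t) w>| <= ||w||^2 = 1 - 1 / ||v||^2.
   Hence |U(t)_00| >= 2 / ||v||^2 - 1, which is a positive constant exactly when
   alpha^2 > (n - 1) / 2.  No spectral theory is needed: the columns of the power series U(t)
   solve phi' = i A phi, and for Hermitian A any two solutions have constant inner product. *)

lemma cnj_mult_self: "cnj z * z = of_real ((cmod z)\<^sup>2)"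
  by (simp only: complex_norm_square mult.commute)

definition hermitian_mat :: "complex mat \<Rightarrow> bool" where
  "hermitian_mat A \<longleftrightarrow> (\<forall>i<dim_row A. \<forall>j<dim_row A. cnj (A $$ (i,j)) = A $$ (j,i))"

definition schroedinger_solution :: "complex mat \<Rightarrow> (real \<Rightarrow> nat \<Rightarrow> complex) \<Rightarrow> bool" where
  "schroedinger_solution A \<phi> \<longleftrightarrow> (\<forall>t. \<forall>i<dim_row A.
     ((\<lambda>s. \<phi> s i) has_vector_derivative \<i> * (\<Sum>j<dim_row A. A $$ (i,j) * \<phi> t j)) (at t))"

lemma schroedinger_solutionD:
  "schroedinger_solution A \<phi> \<Longrightarrow> i < dim_row A \<Longrightarrow>
     ((\<lambda>s. \<phi> s i) has_vector_derivative \<i> * (\<Sum>j<dim_row A. A $$ (i,j) * \<phi> t j)) (at t)"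
  unfolding schroedinger_solution_def by blast

lemma schroedinger_solution_sum:
  assumes "\<And>k. k \<in> K \<Longrightarrow> schroedinger_solution A (\<phi> k)"
  shows "schroedinger_solution A (\<lambda>t i. \<Sum>k\<in>K. c k * \<phi> k t i)"
  unfolding schroedinger_solution_def
proof (intro allI impI)
  fix t i assume i: "i < dim_row A"
  have "((\<lambda>s. \<Sum>k\<in>K. c k * \<phi> k s i) has_vector_derivative
          (\<Sum>k\<in>K. c k * (\<i> * (\<Sum>j<dim_row A. A $$ (i,j) * \<phi> k t j)))) (at t)"
    by (intro has_vector_derivative_sum has_vector_derivative_mult_right
        schroedinger_solutionD[OF assms i])
  also have "(\<Sum>k\<in>K. c k * (\<i> * (\<Sum>j<dim_row A. A $$ (i,j) * \<phi> k t j)))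
      = \<i> * (\<Sum>j<dim_row A. A $$ (i,j) * (\<Sum>k\<in>K. c k * \<phi> k t j))"
    by (simp add: sum_distrib_left mult_ac sum.swap[of _ K])
  finally show "((\<lambda>s. \<Sum>k\<in>K. c k * \<phi> k s i) has_vector_derivative
      \<i> * (\<Sum>j<dim_row A. A $$ (i,j) * (\<Sum>k\<in>K. c k * \<phi> k t j))) (at t)" .
qed

lemma schroedinger_solution_diff:
  assumes "schroedinger_solution A \<phi>" and "schroedinger_solution A \<psi>"
  shows "schroedinger_solution A (\<lambda>t i. \<phi> t i - \<psi> t i)"
  unfolding schroedinger_solution_def
proof (intro allI impI)
  fix t i assume i: "i < dim_row A"
  show "((\<lambda>s. \<phi> s i - \<psi> s i) has_vector_derivative
      \<i> * (\<Sum>j<dim_row A. A $$ (i,j) * (\<phi> t j - \<psi> t j))) (at t)"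
    using has_vector_derivative_diff[OF schroedinger_solutionD[OF assms(1) i]
        schroedinger_solutionD[OF assms(2) i]]
    by (simp add: right_diff_distrib sum_subtractf)
qed

lemma schroedinger_solution_const:
  assumes "\<And>i. i < dim_row A \<Longrightarrow> (\<Sum>j<dim_row A. A $$ (i,j) * v j) = 0"
  shows "schroedinger_solution A (\<lambda>t. v)"
  unfolding schroedinger_solution_def using assms by (simp add: has_vector_derivative_const)

lemma schroedinger_solution_inner_const:
  assumes herm: "hermitian_mat A"
    and \<phi>: "schroedinger_solution A \<phi>" and \<psi>: "schroedinger_solution A \<psi>"
  shows "(\<Sum>i<dim_row A. cnj (\<psi> t i) * \<phi> t i) = (\<Sum>i<dim_row A. cnj (\<psi> 0 i) * \<phi> 0 i)"
proof -
  let ?n = "dim_row A"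
  define h where "h s = (\<Sum>i<?n. cnj (\<psi> s i) * \<phi> s i)" for s
  have "(h has_derivative (\<lambda>_. 0)) (at s within UNIV)" for s
  proof -
    define D where "D f i = \<i> * (\<Sum>j<?n. A $$ (i,j) * f s j)" for f i
    have "(h has_vector_derivative (\<Sum>i<?n. cnj (\<psi> s i) * D \<phi> i + cnj (D \<psi> i) * \<phi> s i)) (at s)"
      unfolding h_def D_def
      by (intro has_vector_derivative_sum has_vector_derivative_mult has_vector_derivative_cnj
          schroedinger_solutionD[OF \<phi>] schroedinger_solutionD[OF \<psi>]) auto
    moreover have "(\<Sum>i<?n. cnj (\<psi> s i) * D \<phi> i + cnj (D \<psi> i) * \<phi> s i) = 0"
    proof -
      have "(\<Sum>i<?n. cnj (D \<psi> i) * \<phi> s i) = - \<i> * (\<Sum>i<?n. \<Sum>j<?n. A $$ (j,i) * cnj (\<psi> s j) * \<phi> s i)"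
        using herm unfolding D_def hermitian_mat_def
        by (simp add: cnj_sum sum_distrib_left sum_distrib_right mult_ac)
      also have "\<dots> = - (\<Sum>i<?n. cnj (\<psi> s i) * D \<phi> i)"
        unfolding D_def by (subst sum.swap) (simp add: sum_distrib_left sum_negf mult_ac)
      finally show ?thesis by (simp add: sum.distrib)
    qed
    ultimately show ?thesis by (simp add: has_vector_derivative_def)
  qed
  then obtain c where "\<forall>s\<in>UNIV. h s = c"
    using has_derivative_zero_constant[OF convex_UNIV] by blast
  then show ?thesis unfolding h_def by simp
qed

lemma schroedinger_solution_norm_const:
  assumes "hermitian_mat A" and "schroedinger_solution A \<phi>"
  shows "(\<Sum>i<dim_row A. (cmod (\<phi> t i))\<^sup>2) = (\<Sum>i<dim_row A. (cmod (\<phi> 0 i))\<^sup>2)"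
proof -
  have "complex_of_real (\<Sum>i<dim_row A. (cmod (\<phi> t i))\<^sup>2)
      = complex_of_real (\<Sum>i<dim_row A. (cmod (\<phi> 0 i))\<^sup>2)"
    unfolding of_real_sum cnj_mult_self[symmetric]
    by (rule schroedinger_solution_inner_const[OF assms assms(2)])
  then show ?thesis by (simp only: of_real_eq_iff)
qed

lemma schroedinger_solution_unique:
  assumes "hermitian_mat A" and \<phi>: "schroedinger_solution A \<phi>" and \<psi>: "schroedinger_solution A \<psi>"
    and init: "\<And>i. i < dim_row A \<Longrightarrow> \<phi> 0 i = \<psi> 0 i" and i: "i < dim_row A"
  shows "\<phi> t i = \<psi> t i"
proof -
  have "(\<Sum>i<dim_row A. (cmod (\<phi> t i - \<psi> t i))\<^sup>2) = 0"
    using schroedinger_solution_norm_const[OF assms(1) schroedinger_solution_diff[OF \<phi> \<psi>], of t]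
    by (simp add: init)
  then show ?thesis using i by (simp add: sum_nonneg_eq_0_iff)
qed

lemma pow_mat_Suc_left:
  assumes A: "A \<in> carrier_mat n n"
  shows "A ^\<^sub>m Suc k = A * A ^\<^sub>m k"
proof (induction k)
  case 0 then show ?case using A by simp
next
  case (Suc k)
  have "A ^\<^sub>m Suc (Suc k) = (A * A ^\<^sub>m k) * A" using Suc by simp
  also have "\<dots> = A * (A ^\<^sub>m k * A)" using A by (intro assoc_mult_mat) auto
  finally show ?case by simp
qed

lemma pow_mat_Suc_entry:
  assumes A: "A \<in> carrier_mat n n" and "i < n" "j < n"
  shows "(A ^\<^sub>m Suc k) $$ (i,j) = (\<Sum>l<n. A $$ (i,l) * (A ^\<^sub>m k) $$ (l,j))"
  using assms unfolding pow_mat_Suc_left[OF A] by (simp add: scalar_prod_def atLeast0LessThan)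

lemma norm_pow_mat_entry_le:
  assumes A: "A \<in> carrier_mat n n" and "i < n" "j < n"
  shows "cmod ((A ^\<^sub>m k) $$ (i,j)) \<le> (\<Sum>l<n. \<Sum>m<n. cmod (A $$ (l,m))) ^ k"
  using assms(2)
proof (induction k arbitrary: i)
  case 0 then show ?case using A assms(3) by simp
next
  case (Suc k)
  define K where "K = (\<Sum>l<n. \<Sum>m<n. cmod (A $$ (l,m)))"
  have "0 \<le> K" unfolding K_def by (intro sum_nonneg) auto
  have row: "(\<Sum>l<n. cmod (A $$ (i,l))) \<le> K"
    unfolding K_def using Suc.prems by (intro member_le_sum) (auto intro: sum_nonneg)
  have "cmod ((A ^\<^sub>m Suc k) $$ (i,j)) \<le> (\<Sum>l<n. cmod (A $$ (i,l)) * cmod ((A ^\<^sub>m k) $$ (l,j)))"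
    unfolding pow_mat_Suc_entry[OF A Suc.prems assms(3)]
    by (rule order.trans[OF norm_sum]) (simp add: norm_mult)
  also have "\<dots> \<le> (\<Sum>l<n. cmod (A $$ (i,l)) * K ^ k)"
    using Suc.IH unfolding K_def by (intro sum_mono mult_left_mono) auto
  also have "\<dots> \<le> K * K ^ k"
    unfolding sum_distrib_right[symmetric] using \<open>0 \<le> K\<close> by (intro mult_right_mono row) auto
  finally show ?case unfolding K_def by simp
qed

lemma transition_entry_powser:
  assumes "A \<in> carrier_mat n n" and "i < n" "j < n"
  shows "transition A t $$ (i,j) = (\<Sum>k. (\<i> ^ k / fact k * (A ^\<^sub>m k) $$ (i,j)) * of_real t ^ k)"
  using assms unfolding transition_def by (simp add: power_mult_distrib mult_ac)

lemma summable_transition_powser: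
  assumes A: "A \<in> carrier_mat n n" and "i < n" "j < n"
  shows "summable (\<lambda>k. (\<i> ^ k / fact k * (A ^\<^sub>m k) $$ (i,j)) * s ^ k)"
proof (rule summable_comparison_test'[OF summable_exp])
  define K where "K = (\<Sum>l<n. \<Sum>m<n. cmod (A $$ (l,m)))"
  fix k
  have "norm ((\<i> ^ k / fact k * (A ^\<^sub>m k) $$ (i,j)) * s ^ k)
      = cmod ((A ^\<^sub>m k) $$ (i,j)) * cmod s ^ k / fact k"
    by (simp add: norm_mult norm_divide norm_power)
  also have "\<dots> \<le> K ^ k * cmod s ^ k / fact k"
    unfolding K_def
    by (intro divide_right_mono mult_right_mono norm_pow_mat_entry_le[OF assms]) auto
  also have "\<dots> = inverse (fact k) * (K * cmod s) ^ k"
    by (simp add: field_simps power_mult_distrib)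
  finally show "norm ((\<i> ^ k / fact k * (A ^\<^sub>m k) $$ (i,j)) * s ^ k)
      \<le> inverse (fact k) * (K * cmod s) ^ k" .
qed

lemma transition_column_solution:
  assumes A: "A \<in> carrier_mat n n" and j: "j < n"
  shows "schroedinger_solution A (\<lambda>t i. transition A t $$ (i,j))"
  unfolding schroedinger_solution_def
proof (intro allI impI)
  fix t i assume "i < dim_row A"
  then have i: "i < n" using A by simp
  define c where "c l k = \<i> ^ k / fact k * (A ^\<^sub>m k) $$ (l,j)" for l k
  have summable: "summable (\<lambda>k. c l k * s ^ k)" if "l < n" for l s
    unfolding c_def by (rule summable_transition_powser[OF A that j])
  have diffs: "diffs (c i) k = \<i> * (\<Sum>l<n. A $$ (i,l) * c l k)" for k
  proof -
    have "diffs (c i) k = \<i> * (\<i> ^ k / fact k) * (A ^\<^sub>m Suc k) $$ (i,j)"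
      by (simp add: diffs_def c_def divide_simps del: of_nat_Suc pow_mat.simps)
    also have "\<dots> = \<i> * (\<Sum>l<n. A $$ (i,l) * c l k)"
      unfolding pow_mat_Suc_entry[OF A i j] c_def by (simp add: sum_distrib_left mult_ac)
    finally show ?thesis .
  qed
  have series_eq: "(\<Sum>k. diffs (c i) k * s ^ k) = \<i> * (\<Sum>l<n. A $$ (i,l) * (\<Sum>k. c l k * s ^ k))" for s
  proof -
    have "(\<Sum>k. diffs (c i) k * s ^ k) = \<i> * (\<Sum>k. \<Sum>l<n. A $$ (i,l) * (c l k * s ^ k))"
      unfolding diffs
      by (simp add: sum_distrib_right mult.assoc,
          intro suminf_mult summable_sum summable_mult summable) auto
    also have "(\<Sum>k. \<Sum>l<n. A $$ (i,l) * (c l k * s ^ k)) = (\<Sum>l<n. \<Sum>k. A $$ (i,l) * (c l k * s ^ k))"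
      by (rule suminf_sum) (intro summable_mult summable, simp)
    also have "\<dots> = (\<Sum>l<n. A $$ (i,l) * (\<Sum>k. c l k * s ^ k))"
      by (intro sum.cong refl suminf_mult summable) auto
    finally show ?thesis .
  qed
  have "((\<lambda>s. \<Sum>k. c i k * s ^ k) has_field_derivative
      \<i> * (\<Sum>l<n. A $$ (i,l) * (\<Sum>k. c l k * s ^ k))) (at s)" for s
    using termdiffs_strong_converges_everywhere[OF summable[OF i]] unfolding series_eq .
  from has_vector_derivative_real_field[OF this]
  have "((\<lambda>t. \<Sum>k. c i k * of_real t ^ k) has_vector_derivative
      \<i> * (\<Sum>l<n. A $$ (i,l) * (\<Sum>k. c l k * of_real t ^ k))) (at t)" .
  then show "((\<lambda>s. transition A s $$ (i,j)) has_vector_derivative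
      \<i> * (\<Sum>l<dim_row A. A $$ (i,l) * transition A t $$ (l,j))) (at t)"
    using A i j by (simp add: transition_entry_powser[OF A] c_def)
qed

lemma transition_at_zero:
  assumes "A \<in> carrier_mat n n" and "i < n" "j < n"
  shows "transition A 0 $$ (i,j) = (if i = j then 1 else 0)"
  using powser_zero[of "\<lambda>k. \<i> ^ k / fact k * (A ^\<^sub>m k) $$ (i,j)"] assms
  by (simp add: transition_entry_powser[OF assms])

definition evolution :: "complex mat \<Rightarrow> (nat \<Rightarrow> complex) \<Rightarrow> real \<Rightarrow> nat \<Rightarrow> complex" where
  "evolution A x t i = (\<Sum>j<dim_row A. transition A t $$ (i,j) * x j)"

lemma evolution_solution:
  assumes "A \<in> carrier_mat n n"
  shows "schroedinger_solution A (evolution A x)"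
  using schroedinger_solution_sum[of "{..<n}" A "\<lambda>j t i. transition A t $$ (i,j)" x]
    transition_column_solution[OF assms] assms
  unfolding evolution_def[abs_def] by (simp add: mult.commute)

lemma evolution_at_zero:
  assumes "A \<in> carrier_mat n n" and "i < n"
  shows "evolution A x 0 i = x i"
proof -
  have "evolution A x 0 i = (\<Sum>j<n. if i = j then x j else 0)"
    unfolding evolution_def using assms by (intro sum.cong) (auto simp: transition_at_zero)
  then show ?thesis using assms(2) by simp
qed

lemma evolution_null_vector:
  assumes A: "A \<in> carrier_mat n n" and herm: "hermitian_mat A"
    and null: "\<And>i. i < n \<Longrightarrow> (\<Sum>j<n. A $$ (i,j) * v j) = 0" and i: "i < n"
  shows "evolution A v t i = v i"
  using schroedinger_solution_unique[OF herm evolution_solution[OF A] schroedinger_solution_const]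
    evolution_at_zero[OF A] null A i by simp

lemma norm_sum_cnj_mult_le:
  "cmod (\<Sum>i\<in>I. cnj (x i) * y i) \<le> ((\<Sum>i\<in>I. (cmod (x i))\<^sup>2) + (\<Sum>i\<in>I. (cmod (y i))\<^sup>2)) / 2"
proof -
  have "cmod (\<Sum>i\<in>I. cnj (x i) * y i) \<le> (\<Sum>i\<in>I. cmod (x i) * cmod (y i))"
    by (rule order.trans[OF norm_sum]) (simp add: norm_mult)
  also have "\<dots> \<le> (\<Sum>i\<in>I. ((cmod (x i))\<^sup>2 + (cmod (y i))\<^sup>2) / 2)"
  proof (rule sum_mono)
    fix i
    show "cmod (x i) * cmod (y i) \<le> ((cmod (x i))\<^sup>2 + (cmod (y i))\<^sup>2) / 2"
      using sum_squares_bound[of "cmod (x i)" "cmod (y i)"] by (simp add: field_simps)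
  qed
  finally show ?thesis by (simp only: sum_divide_distrib[symmetric] sum.distrib)
qed

lemma orthogonal_residual_basis_vector:
  fixes v w :: "nat \<Rightarrow> complex"
  assumes I: "finite I" "u \<in> I" and N: "N = (\<Sum>i\<in>I. (cmod (v i))\<^sup>2)" "N \<noteq> 0"
    and w: "\<And>i. w i = of_bool (i = u) - cnj (v u) / N * v i"
  shows "(\<Sum>i\<in>I. cnj (v i) * w i) = 0"
    and "(\<Sum>i\<in>I. (cmod (w i))\<^sup>2) = 1 - (cmod (v u))\<^sup>2 / N"
proof -
  have "(\<Sum>i\<in>I. cnj (v i) * w i) = cnj (v u) - cnj (v u) / N * (\<Sum>i\<in>I. cnj (v i) * v i)"
    using I by (simp add: w right_diff_distrib sum_subtractf sum_distrib_left mult_ac)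
  also have "(\<Sum>i\<in>I. cnj (v i) * v i) = of_real N"
    unfolding N cnj_mult_self by (simp add: of_real_sum)
  finally show orth: "(\<Sum>i\<in>I. cnj (v i) * w i) = 0"
    using N(2) by simp
  have "(\<Sum>i\<in>I. cnj (w i) * w i)
      = (\<Sum>i\<in>I. cnj (w i) * (of_bool (i = u) - cnj (v u) / N * v i))"
    by (intro sum.cong refl) (simp only: w)
  also have "\<dots> = cnj (w u) - cnj (v u) / N * cnj (\<Sum>i\<in>I. cnj (v i) * w i)"
    using I by (simp add: right_diff_distrib sum_subtractf sum_distrib_left cnj_sum mult_ac)
  also have "\<dots> = cnj (w u)"
    using orth by simp
  also have "\<dots> = of_real (1 - (cmod (v u))\<^sup>2 / N)"
    unfolding w[of u] of_real_diff of_real_divide complex_norm_square by (simp add: mult.commute)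
  finally show "(\<Sum>i\<in>I. (cmod (w i))\<^sup>2) = 1 - (cmod (v u))\<^sup>2 / N"
    unfolding cnj_mult_self of_real_sum[symmetric] of_real_eq_iff .
qed

lemma evolution_norm:
  assumes A: "A \<in> carrier_mat n n" and herm: "hermitian_mat A"
  shows "(\<Sum>i<n. (cmod (evolution A x t i))\<^sup>2) = (\<Sum>i<n. (cmod (x i))\<^sup>2)"
  using schroedinger_solution_norm_const[OF herm evolution_solution[OF A], of x t] A
  by (simp add: evolution_at_zero[OF A])

lemma evolution_orthogonal_null_vector:
  assumes A: "A \<in> carrier_mat n n" and herm: "hermitian_mat A"
    and null: "\<And>i. i < n \<Longrightarrow> (\<Sum>j<n. A $$ (i,j) * v j) = 0"
    and orth: "(\<Sum>i<n. cnj (v i) * x i) = 0"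
  shows "(\<Sum>i<n. cnj (v i) * evolution A x t i) = 0"
proof -
  have "schroedinger_solution A (\<lambda>_. v)"
    using null A by (intro schroedinger_solution_const) simp
  from schroedinger_solution_inner_const[OF herm evolution_solution[OF A] this, of x t]
  show ?thesis using A orth by (simp add: evolution_at_zero[OF A])
qed

lemma transition_diag_split:
  assumes A: "A \<in> carrier_mat n n" and herm: "hermitian_mat A"
    and null: "\<And>i. i < n \<Longrightarrow> (\<Sum>j<n. A $$ (i,j) * v j) = 0" and u: "u < n"
    and unit: "\<And>i. c * v i + w i = of_bool (i = u)"
    and orth: "(\<Sum>i<n. cnj (v i) * w i) = 0"
  shows "transition A t $$ (u,u) = c * v u + (\<Sum>i<n. cnj (w i) * evolution A w t i)"
proof -
  have dim: "dim_row A = n" using A by simp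
  have "transition A t $$ (u,u) = evolution A (\<lambda>i. c * v i + w i) t u"
    using u by (simp add: evolution_def unit dim)
  also have "\<dots> = c * evolution A v t u + evolution A w t u"
    by (simp add: evolution_def sum.distrib sum_distrib_left algebra_simps)
  also have "evolution A v t u = v u"
    by (rule evolution_null_vector[OF A herm null u])
  also have "evolution A w t u = (\<Sum>i<n. cnj (c * v i + w i) * evolution A w t i)"
  proof -
    have "cnj (of_bool P) = of_bool P" for P by (cases P) auto
    then show ?thesis using u by (simp add: unit)
  qed
  also have "\<dots> = cnj c * (\<Sum>i<n. cnj (v i) * evolution A w t i)
      + (\<Sum>i<n. cnj (w i) * evolution A w t i)"
    by (simp only: complex_cnj_add complex_cnj_mult distrib_right sum.distrib sum_distrib_left
        mult.assoc)
  finally show ?thesis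
    using evolution_orthogonal_null_vector[OF A herm null orth] by simp
qed

lemma norm_transition_diag_ge:
  assumes A: "A \<in> carrier_mat n n" and herm: "hermitian_mat A"
    and null: "\<And>i. i < n \<Longrightarrow> (\<Sum>j<n. A $$ (i,j) * v j) = 0" and u: "u < n"
  shows "2 * (cmod (v u))\<^sup>2 / (\<Sum>i<n. (cmod (v i))\<^sup>2) - 1 \<le> cmod (transition A t $$ (u,u))"
proof (cases "v u = 0")
  case True
  have "-1 \<le> cmod (transition A t $$ (u,u))" by (rule order.trans[OF _ norm_ge_zero]) simp
  with True show ?thesis by simp
next
  case False
  define N where "N = (\<Sum>i<n. (cmod (v i))\<^sup>2)"
  define p where "p = (cmod (v u))\<^sup>2 / N"
  define w where "w i = of_bool (i = u) - cnj (v u) / N * v i" for i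
  have "(cmod (v u))\<^sup>2 \<le> N"
    unfolding N_def using u by (intro member_le_sum) auto
  moreover have "0 < (cmod (v u))\<^sup>2" using False by simp
  ultimately have "N \<noteq> 0" by linarith
  have "u \<in> {..<n}" using u by simp
  note residual = orthogonal_residual_basis_vector[OF finite_lessThan this N_def \<open>N \<noteq> 0\<close> w_def,
      folded p_def]
  have "cnj (v u) / N * v i + w i = of_bool (i = u)" for i
    by (simp add: w_def)
  from transition_diag_split[OF A herm null u this residual(1)]
  have "transition A t $$ (u,u) = of_real p + (\<Sum>i<n. cnj (w i) * evolution A w t i)"
    using \<open>N \<noteq> 0\<close> unfolding p_def of_real_divide complex_norm_square by (simp add: field_simps)
  moreover have "cmod (\<Sum>i<n. cnj (w i) * evolution A w t i) \<le> 1 - p"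
    using norm_sum_cnj_mult_le[of w "evolution A w t" "{..<n}"] residual(2)
    by (simp add: evolution_norm[OF A herm])
  moreover have "0 \<le> p" unfolding p_def N_def by (simp add: sum_nonneg)
  moreover have "2 * (cmod (v u))\<^sup>2 / N = 2 * p" by (simp add: p_def)
  ultimately show ?thesis
    using norm_diff_ineq[of "complex_of_real p" "\<Sum>i<n. cnj (w i) * evolution A w t i"]
    unfolding N_def[symmetric] by simp
qed

lemma sedentaryI:
  assumes "0 < C" and "\<And>t. 0 < t \<Longrightarrow> C \<le> cmod (transition A t $$ (u,u))"
  shows "sedentary A u"
proof -
  have "min C 1 \<le> (INF t\<in>{0<..}. cmod (transition A t $$ (u,u)))"
    using assms(2) by (intro cINF_greatest) (auto intro: order.trans[OF min.cobounded1])
  then show ?thesis unfolding sedentary_def using assms(1) by (intro exI[of _ "min C 1"]) auto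
qed

lemma path_adj_carrier: "path_adj n \<alpha> \<in> carrier_mat n n"
  unfolding path_adj_def by simp

lemma path_adj_hermitian: "hermitian_mat (path_adj n \<alpha>)"
  unfolding hermitian_mat_def path_adj_def by auto

lemma path_adj_mult_entry:
  assumes i: "i < n"
  shows "(\<Sum>j<n. path_adj n \<alpha> $$ (i,j) * x j) =
    (if i + 1 < n then of_real (if i = 0 then 1 / \<alpha> else 1) * x (i + 1) else 0) +
    (if 0 < i then of_real (if i = 1 then 1 / \<alpha> else 1) * x (i - 1) else 0)"
proof -
  have "(\<Sum>j<n. path_adj n \<alpha> $$ (i,j) * x j) =
      (\<Sum>j<n. (if j = i + 1 then of_real (if i = 0 then 1 / \<alpha> else 1) * x (i + 1) else 0) +
        (if j = i - 1 \<and> 0 < i then of_real (if i = 1 then 1 / \<alpha> else 1) * x (i - 1) else 0))"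
    using i by (intro sum.cong refl) (auto simp: path_adj_def)
  then show ?thesis using i by (simp add: sum.distrib)
qed

definition path_null_vector :: "real \<Rightarrow> nat \<Rightarrow> real" where
  "path_null_vector \<alpha> i = (if odd i then 0 else if i = 0 then 1 else (-1) ^ (i div 2) / \<alpha>)"

lemma path_adj_null_vector:
  assumes n: "odd n" and i: "i < n"
  shows "(\<Sum>j<n. path_adj n \<alpha> $$ (i,j) * of_real (path_null_vector \<alpha> j)) = 0"
proof -
  let ?v = "\<lambda>j. complex_of_real (path_null_vector \<alpha> j)"
  have "(\<Sum>j<n. path_adj n \<alpha> $$ (i,j) * ?v j) =
    (if i + 1 < n then of_real (if i = 0 then 1 / \<alpha> else 1) * ?v (i + 1) else 0) +
    (if 0 < i then of_real (if i = 1 then 1 / \<alpha> else 1) * ?v (i - 1) else 0)"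
    by (rule path_adj_mult_entry[OF i])
  also have "\<dots> = 0"
  proof (cases "even i")
    case True
    then show ?thesis by (auto simp: path_null_vector_def)
  next
    case False
    then obtain k where k: "i = 2 * k + 1" using oddE by blast
    with n i have "i + 1 < n" by presburger
    then show ?thesis using k by (cases k) (auto simp: path_null_vector_def)
  qed
  finally show ?thesis .
qed

lemma path_null_vector_norm:
  "(\<Sum>i<2 * m + 1. (path_null_vector \<alpha> i)\<^sup>2) = 1 + real m / \<alpha>\<^sup>2"
proof (induction m)
  case 0
  then show ?case by (simp add: path_null_vector_def)
next
  case (Suc m)
  have "2 * Suc m + 1 = Suc (Suc (2 * m + 1))" by simp
  moreover have "((-1::real) ^ m)\<^sup>2 = 1" by (simp add: power2_eq_square flip: power_mult_distrib)
  ultimately show ?case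
    using Suc by (simp add: path_null_vector_def power_divide add_divide_distrib)
qed

theorem proposition22:
  fixes n :: nat and \<alpha> :: real
  assumes "n \<ge> 3" and "odd n" and "\<alpha> \<noteq> 0"
    and "\<bar>\<alpha>\<bar> > sqrt ((real n - 1) / 2)"
  shows "sedentary (path_adj n \<alpha>) 0"
proof -
  obtain m where n: "n = 2 * m + 1" using \<open>odd n\<close> oddE by blast
  then have "0 < n" by simp
  define v where "v i = complex_of_real (path_null_vector \<alpha> i)" for i
  have null: "(\<Sum>j<n. path_adj n \<alpha> $$ (i,j) * v j) = 0" if "i < n" for i
    unfolding v_def by (rule path_adj_null_vector[OF \<open>odd n\<close> that])
  have "sqrt (real m) < \<bar>\<alpha>\<bar>" using assms(4) n by simp
  then have "sqrt (real m) < sqrt (\<alpha>\<^sup>2)" by simp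
  then have "real m < \<alpha>\<^sup>2" by (simp only: real_sqrt_less_iff)
  have ratio: "2 * (cmod (v 0))\<^sup>2 / (\<Sum>i<n. (cmod (v i))\<^sup>2) = 2 / (1 + real m / \<alpha>\<^sup>2)"
    using path_null_vector_norm[where m=m and \<alpha>=\<alpha>] by (simp add: v_def n path_null_vector_def)
  show ?thesis
  proof (rule sedentaryI)
    show "0 < 2 / (1 + real m / \<alpha>\<^sup>2) - 1"
      using \<open>real m < \<alpha>\<^sup>2\<close> \<open>\<alpha> \<noteq> 0\<close> by (simp add: field_simps)
    show "2 / (1 + real m / \<alpha>\<^sup>2) - 1 \<le> cmod (transition (path_adj n \<alpha>) t $$ (0,0))" for t
      using norm_transition_diag_ge[OF path_adj_carrier path_adj_hermitian null \<open>0 < n\<close>, of t]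
      unfolding ratio .
  qed
qed

end
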